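(* Let $\overline{F}(x) = 1$ for $x < 0$ and $\overline{F}(x) = (\lfloor x \rfloor + 2)^{-1}$ for $x \geq 0$, and let $\theta \in (0,1)$. Then $\theta\, \overline{F}(x) \leq \overline{F}(x/\theta)$ holds for all $x \geq 0$ if and only if $$\theta \in \mathcal{A} := \left(0, \tfrac{1}{2}\right] \cup \left\{ \tfrac{k+1}{2k+1} : k \in \{1,2,3,\dots\} \right\}.$$ *)

theory Defs
  imports Complex_Main
begin

definition Fbar :: "real \<Rightarrow> real" where
  "Fbar x = (if x < 0 then 1 else 1 / (real_of_int \<lfloor>x\<rfloor> + 2))"

definition setA :: "real set" where
  "setA = {0<..1/2} \<union> {(real k + 1) / (2 * real k + 1) | k::nat. k \<ge> 1}"

end

theory Submission
  imports Defs
begin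

text \<open>
  For \<open>x \<ge> 0\<close> put \<open>n = \<lfloor>x\<rfloor>\<close> and \<open>m = \<lfloor>x/\<theta>\<rfloor>\<close>; the inequality reads \<open>\<theta> (m + 2) \<le> n + 2\<close>, and
  we always have \<open>m \<theta> < n + 1\<close>. For \<open>\<theta> \<le> 1/2\<close> this suffices at once. For
  \<open>\<theta> = (k + 1)/(2k + 1)\<close> it becomes the integer inequality \<open>m (k + 1) < (n + 1)(2k + 1)\<close>,
  whose slack of at least one absorbs the extra \<open>2 (k + 1)\<close>. Every other \<open>\<theta> \<in> (1/2, 1)\<close>
  lies strictly between two consecutive ratios, \<open>(N + 1)/(2N + 1) < \<theta> < N/(2N - 1)\<close>, and
  then \<open>x = (2N - 1) \<theta>\<close> has \<open>n = N - 1\<close>, \<open>m = 2N - 1\<close> and violates the inequality.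
\<close>

lemma scaled_Fbar_le_iff:
  fixes \<theta> x :: real
  assumes "0 < \<theta>" and "0 \<le> x"
  shows "\<theta> * Fbar x \<le> Fbar (x / \<theta>) \<longleftrightarrow> \<theta> * (\<lfloor>x / \<theta>\<rfloor> + 2) \<le> \<lfloor>x\<rfloor> + 2"
proof -
  have "0 \<le> x / \<theta>" using assms by simp
  then have "0 < real_of_int \<lfloor>x\<rfloor> + 2" and "0 < real_of_int \<lfloor>x / \<theta>\<rfloor> + 2"
    using assms by linarith+
  with \<open>0 \<le> x / \<theta>\<close> assms show ?thesis
    unfolding Fbar_def by (simp add: field_simps)
qed

lemma floor_div_mult_lt_floor_Suc:
  fixes \<theta> x :: real
  assumes "0 < \<theta>"
  shows "\<lfloor>x / \<theta>\<rfloor> * \<theta> < \<lfloor>x\<rfloor> + 1"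
proof -
  have "\<lfloor>x / \<theta>\<rfloor> * \<theta> \<le> x / \<theta> * \<theta>"
    using assms by (intro mult_right_mono) auto
  also have "\<dots> = x" using assms by simp
  finally show ?thesis by linarith
qed

lemma scaled_Fbar_le_if_le_half:
  fixes \<theta> x :: real
  assumes "0 < \<theta>" and "\<theta> \<le> 1/2" and "0 \<le> x"
  shows "\<theta> * Fbar x \<le> Fbar (x / \<theta>)"
  using floor_div_mult_lt_floor_Suc[OF assms(1), of x] assms
  by (simp add: scaled_Fbar_le_iff algebra_simps)

lemma scaled_Fbar_le_at_ratio:
  fixes x :: real and k :: nat
  defines "\<theta> \<equiv> (real k + 1) / (2 * real k + 1)"
  assumes "0 \<le> x"
  shows "\<theta> * Fbar x \<le> Fbar (x / \<theta>)"
proof -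
  define n where "n = \<lfloor>x\<rfloor>"
  define m where "m = \<lfloor>x / \<theta>\<rfloor>"
  have \<theta>_pos: "0 < \<theta>" and \<theta>_denom: "\<theta> * (2 * real k + 1) = real k + 1"
    unfolding \<theta>_def by (simp_all add: field_simps)
  have "m * \<theta> * (2 * real k + 1) < (n + 1) * (2 * real k + 1)"
    using floor_div_mult_lt_floor_Suc[OF \<theta>_pos, of x] unfolding m_def n_def
    by (intro mult_strict_right_mono) auto
  then have "real_of_int (m * (int k + 1)) < real_of_int ((n + 1) * (2 * int k + 1))"
    by (simp add: \<theta>_denom mult.assoc)
  then have "m * (int k + 1) < (n + 1) * (2 * int k + 1)"
    by linarith
  then have "(m + 2) * (int k + 1) \<le> (n + 2) * (2 * int k + 1)"
    by (simp add: algebra_simps)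
  then have "real_of_int ((m + 2) * (int k + 1)) \<le> real_of_int ((n + 2) * (2 * int k + 1))"
    by (simp only: of_int_le_iff)
  then have "(m + 2) * (\<theta> * (2 * real k + 1)) \<le> (n + 2) * (2 * real k + 1)"
    unfolding \<theta>_denom by simp
  then have "\<theta> * (m + 2) * (2 * real k + 1) \<le> (n + 2) * (2 * real k + 1)"
    by (simp only: ac_simps)
  then have "\<theta> * (m + 2) \<le> n + 2"
    by (rule mult_right_le_imp_le) simp
  with \<theta>_pos assms(2) show ?thesis
    unfolding m_def n_def by (simp add: scaled_Fbar_le_iff)
qed

lemma notin_setA_between_ratios:
  fixes \<theta> :: real
  assumes "0 < \<theta>" and "\<theta> < 1" and "\<theta> \<notin> setA"
  obtains N :: nat
  where "1 \<le> N" and "(2 * real N - 1) * \<theta> < N" and "real N + 1 < (2 * real N + 1) * \<theta>"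
proof -
  have half: "1/2 < \<theta>" using assms unfolding setA_def by auto
  define q where "q = (1 - \<theta>) / (2 * \<theta> - 1)"
  \<comment> \<open>\<open>\<theta> = (q + 1)/(2q + 1)\<close>, so \<open>\<theta>\<close> is one of the ratios iff \<open>q\<close> is a positive integer\<close>
  have "0 < q" using assms half unfolding q_def by simp
  have q_not_nat: "q \<noteq> real k" for k :: nat
  proof
    assume "q = real k"
    with \<open>0 < q\<close> have "1 \<le> k" by simp
    from \<open>q = real k\<close> half have "\<theta> = (real k + 1) / (2 * real k + 1)"
      unfolding q_def by (simp add: field_simps)
    with \<open>1 \<le> k\<close> assms(3) show False unfolding setA_def by blast
  qed
  define N where "N = nat \<lceil>q\<rceil>"
  have "real N = \<lceil>q\<rceil>" using \<open>0 < q\<close> unfolding N_def by simp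
  moreover have "real_of_int \<lceil>q\<rceil> \<noteq> q" using q_not_nat[of N] \<open>real N = \<lceil>q\<rceil>\<close> by argo
  ultimately have "real N - 1 < q" and "q < real N" by linarith+
  show thesis
  proof
    have "0 < real N" using \<open>0 < q\<close> \<open>q < real N\<close> by linarith
    then show "1 \<le> N" by simp
    show "(2 * real N - 1) * \<theta> < N"
      using \<open>real N - 1 < q\<close> half unfolding q_def by (simp add: field_simps)
    show "real N + 1 < (2 * real N + 1) * \<theta>"
      using \<open>q < real N\<close> half unfolding q_def by (simp add: field_simps)
  qed
qed

lemma scaled_Fbar_gt_between_ratios:
  fixes \<theta> :: real and N :: nat
  assumes "1 \<le> N" and "(2 * real N - 1) * \<theta> < N" and "real N + 1 < (2 * real N + 1) * \<theta>"
  shows "\<not> \<theta> * Fbar ((2 * real N - 1) * \<theta>) \<le> Fbar ((2 * real N - 1) * \<theta> / \<theta>)"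
proof -
  define x where "x = (2 * real N - 1) * \<theta>"
  have "(2 * real N + 1) * (1/2) < (2 * real N + 1) * \<theta>"
    using assms(3) by (simp add: algebra_simps)
  then have half: "1/2 < \<theta>" by (rule mult_left_less_imp_less) simp
  have "0 \<le> x" using assms(1) half unfolding x_def by simp
  have "x / \<theta> = of_int (2 * int N - 1)"
    using half unfolding x_def by simp
  then have "\<theta> * (\<lfloor>x / \<theta>\<rfloor> + 2) = (2 * real N + 1) * \<theta>"
    by (simp only: floor_of_int) (simp add: algebra_simps)
  moreover have "\<lfloor>x\<rfloor> = int N - 1"
  proof (rule floor_unique)
    have "(2 * real N - 1) * (1/2) \<le> x"
      unfolding x_def using half assms(1) by (intro mult_left_mono) auto
    then show "real_of_int (int N - 1) \<le> x" by simp
    show "x < real_of_int (int N - 1) + 1" using assms(2) unfolding x_def by simp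
  qed
  then have "real_of_int \<lfloor>x\<rfloor> + 2 = real N + 1" by simp
  ultimately have "\<not> \<theta> * (\<lfloor>x / \<theta>\<rfloor> + 2) \<le> \<lfloor>x\<rfloor> + 2"
    using assms(3) by linarith
  moreover have "0 < \<theta>" using half by simp
  ultimately show ?thesis
    using \<open>0 \<le> x\<close> unfolding x_def[symmetric] by (simp add: scaled_Fbar_le_iff)
qed

theorem lemma13:
  fixes \<theta> :: real
  assumes "0 < \<theta>" and "\<theta> < 1"
  shows "(\<forall>x::real. x \<ge> 0 \<longrightarrow> \<theta> * Fbar x \<le> Fbar (x / \<theta>)) \<longleftrightarrow> \<theta> \<in> setA"
proof
  assume scaled_le: "\<forall>x::real. x \<ge> 0 \<longrightarrow> \<theta> * Fbar x \<le> Fbar (x / \<theta>)"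
  show "\<theta> \<in> setA"
  proof (rule ccontr)
    assume "\<theta> \<notin> setA"
    with assms obtain N :: nat where N: "1 \<le> N" "(2 * real N - 1) * \<theta> < N"
      "real N + 1 < (2 * real N + 1) * \<theta>"
      by (rule notin_setA_between_ratios)
    have "0 \<le> (2 * real N - 1) * \<theta>" using N(1) assms(1) by simp
    with scaled_le scaled_Fbar_gt_between_ratios[OF N] show False by blast
  qed
next
  assume "\<theta> \<in> setA"
  then show "\<forall>x::real. x \<ge> 0 \<longrightarrow> \<theta> * Fbar x \<le> Fbar (x / \<theta>)"
    unfolding setA_def
    using scaled_Fbar_le_if_le_half scaled_Fbar_le_at_ratio by auto
qed

end
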